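(* $$\pi^3=\frac{81}{4\cdot3^{5/2}}\sum_{n=0}^\infty\frac{(-1)^n}{n!}2^n\left[\gamma_n\!\left(\tfrac13\right)-\gamma_n\!\left(\tfrac23\right)\right]$$ $$=\frac{343}{32\cdot7^{5/2}}\sum_{n=0}^\infty\frac{(-1)^n}{n!}2^n\left[\gamma_n\!\left(\tfrac17\right)+\gamma_n\!\left(\tfrac27\right)-\gamma_n\!\left(\tfrac37\right)+\gamma_n\!\left(\tfrac47\right)-\gamma_n\!\left(\tfrac57\right)-\gamma_n\!\left(\tfrac67\right)\right].$$
   Context: The Stieltjes constants $\gamma_n(a)$ ($\mathrm{Re}\,a>0$) are defined by the Laurent expansion of the Hurwitz zeta function $\zeta(s,a)=\sum_{n\ge0}(n+a)^{-s}$ at $s=1$: $\zeta(s,a)=\frac{1}{s-1}+\sum_{n\ge0}\frac{(-1)^n}{n!}\gamma_n(a)(s-1)^n$. *)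

theory Defs
  imports "HOL-Complex_Analysis.Complex_Analysis"
begin

definition hurwitz_zeta_series :: "real \<Rightarrow> complex \<Rightarrow> complex" where
  "hurwitz_zeta_series a s = (\<Sum>k. complex_of_real (real k + a) powr (- s))"

text \<open>The regular part zeta(s,a) - 1/(s-1): the unique entire function agreeing
  with it on Re s > 1 (analytic continuation; unique by the identity theorem).\<close>
definition hurwitz_zeta_regular :: "real \<Rightarrow> complex \<Rightarrow> complex" where
  "hurwitz_zeta_regular a = (THE g. g holomorphic_on UNIV \<and>
      (\<forall>s. Re s > 1 \<longrightarrow> g s = hurwitz_zeta_series a s - 1 / (s - 1)))"

text \<open>Stieltjes constants via the Laurent expansion at s = 1:
  zeta(s,a) = 1/(s-1) + sum_n (-1)^n/n! gamma_n(a) (s-1)^n, hence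
  gamma_n(a) = (-1)^n times the n-th derivative of the regular part at 1.\<close>
definition stieltjes :: "nat \<Rightarrow> real \<Rightarrow> complex" where
  "stieltjes n a = (-1) ^ n * (deriv ^^ n) (hurwitz_zeta_regular a) 1"

end

theory Submission
  imports Defs
begin

text \<open>The regular part of \<open>\<zeta>(s, a)\<close> is entire, so its Taylor series at \<open>s = 1\<close> converges at
  \<open>s = 3\<close>; by the definition of the Stieltjes constants this says
  \<open>\<Sum>n. (-1)^n / n! 2^n \<gamma>\<^sub>n(a) = \<zeta>(3, a) - 1/2\<close>. In both combinations the constants \<open>1/2\<close> cancel and
  the values pair up as \<open>\<zeta>(3, x) - \<zeta>(3, 1 - x) = \<pi>^3 cos \<pi>x / sin^3 \<pi>x\<close>, which follows by
  differentiating the reflection formula for \<open>ln \<Gamma>\<close> three times. At \<open>x = 1/3\<close> this is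
  \<open>4\<pi>^3 / (3 sqrt 3)\<close>; for the sevenths, \<open>cos (\<pi>/7)\<close> is a root of \<open>8c^3 - 4c^2 - 4c + 1\<close>, which
  reduces the signed sum to \<open>32\<pi>^3 / sqrt 7\<close>.

  The regular part is entire because, for \<open>b > 1\<close>, expanding \<open>(k + b + 1)^(1-s)\<close> binomially and
  telescoping over \<open>k\<close> gives
  \<open>(s - 1) \<zeta>(s, b) = b^(1-s) + \<Sum>j. c\<^sub>j(s) (s + j) \<zeta>(s + j + 1, b)\<close> with \<open>c\<^sub>j\<close> polynomial in \<open>s\<close>;
  iterating this identity continues \<open>(s - 1) \<zeta>(s, b)\<close> to the whole plane.\<close>

notation hurwitz_zeta_series ("\<zeta>")

section \<open>Pochhammer bounds and double series\<close>

lemma norm_pochhammer_le: "norm (pochhammer (z::complex) n) \<le> pochhammer (norm z) n"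
proof -
  have "norm (pochhammer z n) = (\<Prod>i = 0..<n. norm (z + of_nat i))"
    by (simp add: pochhammer_prod prod_norm)
  also have "\<dots> \<le> (\<Prod>i = 0..<n. norm z + of_nat i)"
    by (intro prod_mono) (auto intro: order.trans[OF norm_triangle_ineq])
  finally show ?thesis by (simp add: pochhammer_prod)
qed

lemma pochhammer_mono: "0 \<le> x \<Longrightarrow> x \<le> y \<Longrightarrow> pochhammer (x::real) n \<le> pochhammer y n"
  unfolding pochhammer_prod by (intro prod_mono) auto

lemma pochhammer_nonneg_real: "0 \<le> x \<Longrightarrow> 0 \<le> pochhammer (x::real) n"
  unfolding pochhammer_prod by (intro prod_nonneg) auto

lemma norm_gbinomial_le: "norm ((z::complex) gchoose k) \<le> pochhammer (norm z) k / fact k"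
proof -
  have "norm (z gchoose k) = norm (pochhammer (-z) k) / fact k"
    by (simp add: gbinomial_pochhammer norm_divide norm_mult norm_power)
  also have "\<dots> \<le> pochhammer (norm z) k / fact k"
    using norm_pochhammer_le[of "-z" k] by (intro divide_right_mono) auto
  finally show ?thesis .
qed

lemma summable_pochhammer_power:
  fixes R r :: real
  assumes "0 \<le> R" "0 < r" "r < 1"
  shows "summable (\<lambda>j. pochhammer R (j + m) / fact (j + m) * r ^ j)"
proof -
  \<comment> \<open>the binomial series of \<open>(1 - r) powr (-R)\<close>\<close>
  have "((-R) gchoose j) * (-r) ^ j = pochhammer R j / fact j * r ^ j" for j
  proof -
    have "((-R) gchoose j) * (-r) ^ j = ((-1) ^ j * (-1) ^ j) * (pochhammer R j / fact j * r ^ j)"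
      unfolding gbinomial_pochhammer minus_minus power_minus[of r j]
      by (simp only: mult_ac divide_inverse)
    then show ?thesis by simp
  qed
  moreover have "summable (\<lambda>j. ((-R) gchoose j) * (-r) ^ j)"
    using gen_binomial_real[of "-r" "-R"] assms by (auto intro: sums_summable)
  ultimately have "summable (\<lambda>j. pochhammer R (j + m) / fact (j + m) * r ^ (j + m))"
    by (subst summable_iff_shift) simp
  then have "summable (\<lambda>j. pochhammer R (j + m) / fact (j + m) * r ^ (j + m) / r ^ m)"
    by (rule summable_divide)
  then show ?thesis
    using assms by (simp add: power_add)
qed

lemma infsum_eq_suminf:
  fixes f :: "nat \<Rightarrow> 'a::banach"
  assumes "summable (\<lambda>n. norm (f n))"
  shows "infsum f UNIV = suminf f"
  using assms summable_norm_cancel[OF assms]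
  by (intro infsumI norm_summable_imp_has_sum) (auto intro: summable_sums)

lemma sums_suminf_swap:
  fixes f :: "nat \<Rightarrow> nat \<Rightarrow> 'a::{banach, second_countable_topology}"
  assumes rows: "\<And>k. summable (\<lambda>j. norm (f k j))"
      and total: "summable (\<lambda>k. \<Sum>j. norm (f k j))"
  shows "(\<lambda>j. \<Sum>k. f k j) sums (\<Sum>k. \<Sum>j. f k j)"
proof -
  have row_sum_nonneg: "(\<Sum>j. norm (f k j)) \<ge> 0" for k
    using rows by (intro suminf_nonneg) auto
  have "(\<lambda>k. norm (infsum (\<lambda>j. norm (f k j)) UNIV)) summable_on UNIV"
    using total rows row_sum_nonneg
    by (subst summable_on_UNIV_nonneg_real_iff) (auto simp: infsum_eq_suminf)
  moreover have "(\<lambda>j. norm (f k j)) summable_on UNIV" for k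
    using rows[of k] by (subst summable_on_UNIV_nonneg_real_iff) auto
  ultimately have "(\<lambda>kj. norm (f (fst kj) (snd kj))) summable_on UNIV \<times> UNIV"
    using Infinite_Sum.abs_summable_on_Sigma_iff[where f = "\<lambda>kj. f (fst kj) (snd kj)" and A = UNIV and B = "\<lambda>_. UNIV"]
    by simp
  then have summable: "(\<lambda>(k, j). f k j) summable_on UNIV \<times> UNIV"
    using abs_summable_summable by (fastforce simp: case_prod_unfold)
  have columns: "summable (\<lambda>k. norm (f k j))" for j
  proof (rule summable_comparison_test[OF _ total], intro exI allI impI)
    fix k
    have "norm (f k j) \<le> (\<Sum>i<Suc j. norm (f k i))" by (simp add: sum_nonneg)
    also have "\<dots> \<le> (\<Sum>i. norm (f k i))" using rows by (intro sum_le_suminf) auto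
    finally show "norm (norm (f k j)) \<le> (\<Sum>i. norm (f k i))" by simp
  qed
  have outer: "summable (\<lambda>k. norm (\<Sum>j. f k j))"
    by (rule summable_comparison_test[OF _ total]) (auto intro!: summable_norm rows)
  have "(\<lambda>(j, k). f k j) summable_on UNIV \<times> UNIV"
    using summable by (subst summable_on_swap) (simp add: case_prod_unfold)
  then have "(\<lambda>j. infsum (\<lambda>k. f k j) UNIV) summable_on UNIV"
    using summable_on_Sigma_banach by fastforce
  then have "(\<lambda>j. infsum (\<lambda>k. f k j) UNIV) sums infsum (\<lambda>j. infsum (\<lambda>k. f k j) UNIV) UNIV"
    by (intro has_sum_imp_sums) (simp add: summable_iff_has_sum_infsum)
  also have "infsum (\<lambda>j. infsum (\<lambda>k. f k j) UNIV) UNIV = infsum (\<lambda>k. infsum (\<lambda>j. f k j) UNIV) UNIV"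
    using infsum_swap_banach[OF summable] by simp
  finally show ?thesis
    using rows columns outer by (simp add: infsum_eq_suminf)
qed

section \<open>The Hurwitz zeta series\<close>

lemma norm_of_real_shift_powr [simp]:
  "b > 0 \<Longrightarrow> norm ((of_nat k + complex_of_real b) powr s) = (real k + b) powr Re s"
  using norm_powr_real_powr[of "complex_of_real (real k + b)" s] by simp

lemma summable_shift_powr:
  assumes "b > 0" "\<sigma> > 1"
  shows "summable (\<lambda>k. (real k + b) powr (-\<sigma>))"
proof (rule summable_comparison_test')
  show "summable (\<lambda>k. real k powr (-\<sigma>))"
    using assms by (subst summable_real_powr_iff) auto
  show "norm ((real k + b) powr (-\<sigma>)) \<le> real k powr (-\<sigma>)" if "k \<ge> 1" for k
    using assms that by (auto intro!: powr_mono2')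
qed

lemma summable_norm_hurwitz_terms:
  assumes "b > 0" "Re s > 1"
  shows "summable (\<lambda>k. norm (complex_of_real (real k + b) powr (-s)))"
  using summable_shift_powr[OF assms] assms by simp

lemma hurwitz_zeta_series_sums:
  assumes "b > 0" "Re s > 1"
  shows "(\<lambda>k. complex_of_real (real k + b) powr (-s)) sums \<zeta> b s"
  unfolding hurwitz_zeta_series_def
  using summable_norm_cancel[OF summable_norm_hurwitz_terms[OF assms]] by (rule summable_sums)

lemma hurwitz_zeta_series_shift:
  assumes "a > 0" "Re s > 1"
  shows "\<zeta> a s = complex_of_real a powr (-s) + \<zeta> (a + 1) s"
proof -
  have "(\<lambda>k. complex_of_real (real (Suc k) + a) powr (-s)) sums \<zeta> (a + 1) s"
    using hurwitz_zeta_series_sums[of "a + 1" s] assms by (simp add: add_ac)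
  then have "(\<lambda>k. complex_of_real (real k + a) powr (-s)) sums (\<zeta> (a + 1) s + complex_of_real a powr (-s))"
    by (subst (asm) sums_Suc_iff) simp
  with hurwitz_zeta_series_sums[OF assms] show ?thesis
    by (simp add: sums_iff add.commute)
qed

lemma hurwitz_zeta_series_holomorphic:
  assumes b: "b > 0"
  shows "\<zeta> b holomorphic_on {s. Re s > 1}"
proof -
  have "(\<lambda>s. \<Sum>k. complex_of_real (real k + b) powr (-s)) holomorphic_on {s. Re s > 1}"
  proof (rule holomorphic_uniform_sequence[where f = "\<lambda>n s. \<Sum>k<n. complex_of_real (real k + b) powr (-s)"])
    show "open {s. Re s > 1}" by (rule open_halfspace_Re_gt)
    show "(\<lambda>s. \<Sum>k<n. complex_of_real (real k + b) powr (-s)) holomorphic_on {s. Re s > 1}" for n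
      by (intro holomorphic_intros)
    fix x assume x: "x \<in> {s. Re s > 1}"
    define d where "d = (Re x - 1) / 2"
    have Re_ge: "Re y \<ge> Re x - d" if "y \<in> cball x d" for y
      using abs_Re_le_cmod[of "x - y"] that by (auto simp: dist_norm)
    have "cball x d \<subseteq> {s. Re s > 1}"
    proof
      fix y assume "y \<in> cball x d"
      with Re_ge[of y] x show "y \<in> {s. Re s > 1}" by (simp add: d_def field_simps)
    qed
    moreover have "uniform_limit (cball x d) (\<lambda>n s. \<Sum>k<n. complex_of_real (real k + b) powr (-s))
        (\<lambda>s. \<Sum>k. complex_of_real (real k + b) powr (-s)) sequentially"
    proof (rule Weierstrass_m_test_ev)
      show "summable (\<lambda>k. (real k + b) powr (-(Re x - d)))"
        using x b by (intro summable_shift_powr) (auto simp: d_def field_simps)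
      show "\<forall>\<^sub>F k in sequentially. \<forall>y\<in>cball x d.
          norm (complex_of_real (real k + b) powr (-y)) \<le> (real k + b) powr (-(Re x - d))"
        using eventually_ge_at_top[of "1::nat"]
        by eventually_elim (use Re_ge b in \<open>fastforce intro!: powr_mono\<close>)
    qed
    moreover have "d > 0" using x by (simp add: d_def)
    ultimately show "\<exists>d>0. cball x d \<subseteq> {s. Re s > 1} \<and>
        uniform_limit (cball x d) (\<lambda>n s. \<Sum>k<n. complex_of_real (real k + b) powr (-s))
          (\<lambda>s. \<Sum>k. complex_of_real (real k + b) powr (-s)) sequentially"
      by blast
  qed
  then show ?thesis
    by (simp add: hurwitz_zeta_series_def [abs_def])
qed

lemma hurwitz_zeta_series_bound:
  assumes b: "b \<ge> 1"
  obtains C where "C \<ge> 0" "\<And>w. Re w \<ge> 2 \<Longrightarrow> norm (\<zeta> b w) \<le> C * b powr (2 - Re w)"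
proof
  define C where "C = (\<Sum>k. (real k + b) powr (-2))"
  have summable_C: "summable (\<lambda>k. (real k + b) powr (-2))"
    using b by (intro summable_shift_powr) auto
  then show "C \<ge> 0" unfolding C_def by (intro suminf_nonneg) auto
  fix w :: complex assume w: "Re w \<ge> 2"
  have "norm (\<zeta> b w) \<le> (\<Sum>k. norm (complex_of_real (real k + b) powr (-w)))"
    unfolding hurwitz_zeta_series_def using b w
    by (intro summable_norm summable_norm_hurwitz_terms) auto
  also have "\<dots> = (\<Sum>k. (real k + b) powr (- Re w))"
    using b by simp
  also have "\<dots> \<le> (\<Sum>k. (real k + b) powr (-2) * b powr (2 - Re w))"
  proof (rule suminf_le)
    show "summable (\<lambda>k. (real k + b) powr (- Re w))"
      using b w by (intro summable_shift_powr) auto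
    show "summable (\<lambda>k. (real k + b) powr (-2) * b powr (2 - Re w))"
      using summable_C by (rule summable_mult2)
    have "(real k + b) powr (- Re w) = (real k + b) powr (-2) * (real k + b) powr (2 - Re w)" for k
      by (simp flip: powr_add)
    also have "\<dots> k \<le> (real k + b) powr (-2) * b powr (2 - Re w)" for k
      using b w by (intro mult_left_mono powr_mono2') auto
    finally show "(real k + b) powr (- Re w) \<le> (real k + b) powr (-2) * b powr (2 - Re w)" for k .
  qed
  also have "\<dots> = C * b powr (2 - Re w)"
    unfolding C_def using summable_C by (rule suminf_mult2[symmetric])
  finally show "norm (\<zeta> b w) \<le> C * b powr (2 - Re w)" .
qed

lemma binomial_series_shift_powr:
  fixes w :: complex and x :: real
  assumes "x > 1"
  shows "(\<lambda>j. (w gchoose (j + 2)) * complex_of_real x powr (w - of_nat (j + 2))) sums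
           (complex_of_real (x + 1) powr w - complex_of_real x powr w - w * complex_of_real x powr (w - 1))"
proof -
  have "(\<lambda>j. (w gchoose j) * complex_of_real x powr (w - of_nat j)) sums complex_of_real (x + 1) powr w"
    using gen_binomial_complex''[of 1 x w] assms by simp
  then have "(\<lambda>j. (w gchoose (j + 2)) * complex_of_real x powr (w - of_nat (j + 2))) sums
      (complex_of_real (x + 1) powr w - (\<Sum>j<2. (w gchoose j) * complex_of_real x powr (w - of_nat j)))"
    by (subst sums_iff_shift) simp
  then show ?thesis
    by (simp add: eval_nat_numeral algebra_simps)
qed

lemma hurwitz_zeta_series_telescoping:
  assumes b: "b > 0" and s: "Re s > 1"
  shows "(\<lambda>k. complex_of_real (real k + b + 1) powr (1 - s) - complex_of_real (real k + b) powr (1 - s)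
              - (1 - s) * complex_of_real (real k + b) powr (-s))
           sums ((s - 1) * \<zeta> b s - complex_of_real b powr (1 - s))"
proof -
  define h where "h k = complex_of_real (real k + b) powr (1 - s)" for k
  have "filterlim (\<lambda>k. b + real k) at_top sequentially"
    by (rule filterlim_tendsto_add_at_top[OF tendsto_const filterlim_real_sequentially])
  then have "h \<longlonglongrightarrow> 0"
    unfolding h_def using s by (intro tendsto_neg_powr_complex_of_real) (auto simp: add.commute)
  then have "(\<lambda>k. (h (Suc k) - h k) - (1 - s) * complex_of_real (real k + b) powr (-s))
      sums ((0 - h 0) - (1 - s) * \<zeta> b s)"
    using b s by (intro sums_diff telescope_sums sums_mult hurwitz_zeta_series_sums) auto
  then show ?thesis
    by (simp add: h_def algebra_simps)
qed

lemma norm_gbinomial_times_powr_le: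
  assumes "x \<ge> b" "b > 1"
  shows "norm ((w gchoose (j + 2)) * complex_of_real x powr (-(s + of_nat j + 1))) \<le>
           x powr (- Re s) * (pochhammer (norm w) (j + 2) / fact (j + 2) * inverse b ^ (j + 1))"
proof -
  have "x powr (-(real j + 1)) \<le> b powr (-real (j + 1))"
    using assms powr_mono2'[of "-real (j + 1)" b x] by (simp add: add.commute)
  also have "b powr (-real (j + 1)) = inverse b ^ (j + 1)"
    using assms by (simp add: powr_minus powr_realpow power_inverse del: of_nat_Suc)
  finally have "x powr (-(real j + 1)) \<le> inverse b ^ (j + 1)" .
  moreover have "norm ((w gchoose (j + 2)) * complex_of_real x powr (-(s + of_nat j + 1))) =
      norm (w gchoose (j + 2)) * (x powr (- Re s) * x powr (-(real j + 1)))"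
    using assms by (simp add: norm_mult norm_powr_real_powr algebra_simps flip: powr_add)
  ultimately have "norm ((w gchoose (j + 2)) * complex_of_real x powr (-(s + of_nat j + 1))) \<le>
      pochhammer (norm w) (j + 2) / fact (j + 2) * (x powr (- Re s) * inverse b ^ (j + 1))"
    by (simp only:) (intro mult_mono mult_left_mono norm_gbinomial_le; simp add: pochhammer_nonneg_real)
  then show ?thesis
    by (simp add: mult_ac)
qed

text \<open>Expand each term of the telescoping series binomially and sum the resulting double series
  by columns instead of rows.\<close>

lemma hurwitz_zeta_series_binomial_recursion:
  assumes b: "b > 1" and s: "Re s > 1"
  shows "(\<lambda>j. ((1 - s) gchoose (j + 2)) * \<zeta> b (s + of_nat j + 1)) sums
           ((s - 1) * \<zeta> b s - complex_of_real b powr (1 - s))"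
proof -
  define x where "x k = real k + b" for k
  define f where "f k j = ((1 - s) gchoose (j + 2)) * complex_of_real (x k) powr (-(s + of_nat j + 1))" for k j
  define c where "c j = pochhammer (norm (1 - s)) (j + 2) / fact (j + 2) * inverse b ^ (j + 1)" for j
  have rows: "(\<lambda>j. f k j) sums (complex_of_real (x k + 1) powr (1 - s) - complex_of_real (x k) powr (1 - s)
              - (1 - s) * complex_of_real (x k) powr (-s))" for k
  proof -
    have "1 - s - of_nat (j + 2) = -(s + of_nat j + 1)" for j
      by (simp add: algebra_simps)
    then show ?thesis
      using binomial_series_shift_powr[of "x k" "1 - s"] b unfolding f_def x_def by simp
  qed
  have "c = (\<lambda>j. inverse b * (pochhammer (norm (1 - s)) (j + 2) / fact (j + 2) * inverse b ^ j))"
    unfolding c_def by (rule ext) (simp only: power_add power_one_right mult_ac)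
  then have summable_c: "summable c"
    using b by (simp only:) (intro summable_mult summable_pochhammer_power; simp add: field_simps)
  have norm_f: "norm (f k j) \<le> x k powr (- Re s) * c j" for k j
    unfolding f_def c_def x_def using b by (intro norm_gbinomial_times_powr_le) auto
  have summable_rows: "summable (\<lambda>j. norm (f k j))" for k
    by (rule summable_comparison_test[OF _ summable_mult[OF summable_c]]) (use norm_f in auto)
  have "summable (\<lambda>k. \<Sum>j. norm (f k j))"
  proof (rule summable_comparison_test)
    show "summable (\<lambda>k. x k powr (- Re s) * suminf c)"
      unfolding x_def using b s by (intro summable_mult2 summable_shift_powr) auto
    have "(\<Sum>j. norm (f k j)) \<le> x k powr (- Re s) * suminf c" for k
      using summable_rows summable_c norm_f
      by (subst suminf_mult[symmetric]) (auto intro!: suminf_le summable_mult)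
    then show "\<exists>N. \<forall>k\<ge>N. norm (\<Sum>j. norm (f k j)) \<le> x k powr (- Re s) * suminf c"
      using summable_rows by (auto simp: suminf_nonneg)
  qed
  from sums_suminf_swap[OF summable_rows this]
  have "(\<lambda>j. \<Sum>k. f k j) sums (\<Sum>k. \<Sum>j. f k j)" .
  moreover have "(\<Sum>k. f k j) = ((1 - s) gchoose (j + 2)) * \<zeta> b (s + of_nat j + 1)" for j
    using hurwitz_zeta_series_sums[of b "s + of_nat j + 1"] b s
    by (simp add: f_def x_def sums_iff suminf_mult)
  moreover have "(\<Sum>k. \<Sum>j. f k j) = (s - 1) * \<zeta> b s - complex_of_real b powr (1 - s)"
    using hurwitz_zeta_series_telescoping[of b s] b s rows by (simp add: x_def sums_iff add_ac)
  ultimately show ?thesis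
    by simp
qed

section \<open>Analytic continuation\<close>

definition hurwitz_Z :: "real \<Rightarrow> complex \<Rightarrow> complex" where
  "hurwitz_Z b s = (s - 1) * \<zeta> b s"

definition continuation_coeff :: "complex \<Rightarrow> nat \<Rightarrow> complex" where
  "continuation_coeff s j = - (((1 - s) gchoose (j + 1)) / of_nat (j + 2))"

text \<open>By the binomial recursion, \<open>hurwitz_Z b\<close> is a fixed point of the following operator
  on the half-plane Re s > 1. Since the right-hand side only uses values at s + j + 1, each
  application extends the half-plane of holomorphy by one to the left.\<close>
definition continuation_step :: "real \<Rightarrow> (complex \<Rightarrow> complex) \<Rightarrow> complex \<Rightarrow> complex" where
  "continuation_step b F s =
     complex_of_real b powr (1 - s) + (\<Sum>j. continuation_coeff s j * F (s + of_nat j + 1))"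

lemma gbinomial_Suc_Suc_eq_continuation_coeff:
  "((1 - s) gchoose (j + 2)) = continuation_coeff s j * (s + of_nat j)"
proof -
  have "(1 - s) * ((1 - s) gchoose (j + 1)) =
      of_nat (j + 1) * ((1 - s) gchoose (j + 1)) + of_nat (j + 2) * ((1 - s) gchoose (j + 2))"
    using gbinomial_mult_1[of "1 - s" "j + 1"] by simp
  then have "of_nat (j + 2) * ((1 - s) gchoose (j + 2)) =
      (1 - s) * ((1 - s) gchoose (j + 1)) - of_nat (j + 1) * ((1 - s) gchoose (j + 1))"
    by (metis add_diff_cancel_left')
  also have "\<dots> = - ((s + of_nat j) * ((1 - s) gchoose (j + 1)))"
    by (simp add: algebra_simps)
  finally show ?thesis
    unfolding continuation_coeff_def by (simp add: field_simps del: of_nat_Suc of_nat_add)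
qed

lemma hurwitz_Z_recursion:
  assumes "b > 1" "Re s > 1"
  shows "(\<lambda>j. continuation_coeff s j * hurwitz_Z b (s + of_nat j + 1)) sums
           (hurwitz_Z b s - complex_of_real b powr (1 - s))"
proof -
  have terms: "continuation_coeff s j * hurwitz_Z b (s + of_nat j + 1) =
      ((1 - s) gchoose (j + 2)) * \<zeta> b (s + of_nat j + 1)" for j
    by (simp only: hurwitz_Z_def gbinomial_Suc_Suc_eq_continuation_coeff mult.assoc add_diff_cancel_right')
  show ?thesis
    unfolding terms hurwitz_Z_def[of b s] by (rule hurwitz_zeta_series_binomial_recursion[OF assms])
qed

lemma continuation_step_eq:
  assumes "b > 1" "Re s > 1" and F: "\<And>s. Re s > 1 \<Longrightarrow> F s = hurwitz_Z b s"
  shows "continuation_step b F s = hurwitz_Z b s"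
  using hurwitz_Z_recursion[OF assms(1,2)] assms(2) F
  by (simp add: continuation_step_def sums_iff)

lemma norm_continuation_term_le:
  assumes b: "b > 1" and C: "\<And>w. Re w \<ge> 2 \<Longrightarrow> norm (\<zeta> b w) \<le> C * b powr (2 - Re w)"
    and y: "Re y + real j \<ge> 1"
  shows "norm (continuation_coeff y j * hurwitz_Z b (y + of_nat j + 1)) \<le>
           pochhammer (norm (1 - y)) (j + 1) / fact (j + 1) * (norm y + 1) * (C * b powr (1 - Re y - real j))"
proof -
  have "norm (y + of_nat j) \<le> norm y + real j"
    using norm_triangle_ineq[of y "of_nat j"] by simp
  also have "\<dots> \<le> (norm y + 1) * (real j + 2)"
    by (simp add: algebra_simps)
  finally have "norm (y + of_nat j) / (real j + 2) \<le> norm y + 1"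
    by (simp add: divide_simps)
  moreover have "norm (\<zeta> b (y + of_nat j + 1)) \<le> C * b powr (1 - Re y - real j)"
    using C[of "y + of_nat j + 1"] y by (simp add: algebra_simps)
  moreover have "norm (continuation_coeff y j * hurwitz_Z b (y + of_nat j + 1)) =
      norm ((1 - y) gchoose (j + 1)) * (norm (y + of_nat j) / (real j + 2)) * norm (\<zeta> b (y + of_nat j + 1))"
    using norm_of_nat[of "j + 2", where 'a = complex]
    by (simp add: continuation_coeff_def hurwitz_Z_def norm_mult norm_divide add_ac mult_ac)
  ultimately show ?thesis
    by (simp only:) (intro mult_mono norm_gbinomial_le mult_nonneg_nonneg; simp add: pochhammer_nonneg_real)
qed

lemma norm_continuation_term_le_uniform:
  assumes b: "b > 1" and C: "C \<ge> 0" "\<And>w. Re w \<ge> 2 \<Longrightarrow> norm (\<zeta> b w) \<le> C * b powr (2 - Re w)"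
    and y: "norm (x - y) \<le> 1" and j: "real j \<ge> 2 - Re x"
  shows "norm (continuation_coeff y j * hurwitz_Z b (y + of_nat j + 1)) \<le>
           pochhammer (norm (1 - x) + 1) (j + 1) / fact (j + 1) * inverse b ^ j
             * ((norm x + 2) * (C * b powr (2 - Re x)))"
proof -
  have Re_y: "Re y \<ge> Re x - 1"
    using abs_Re_le_cmod[of "x - y"] y by simp
  have Re_y_j: "Re y + real j \<ge> 1"
    using Re_y j by linarith
  have "norm (continuation_coeff y j * hurwitz_Z b (y + of_nat j + 1)) \<le>
      pochhammer (norm (1 - y)) (j + 1) / fact (j + 1) * (norm y + 1) * (C * b powr (1 - Re y - real j))"
    by (rule norm_continuation_term_le[OF b C(2) Re_y_j])
  also have "\<dots> \<le> pochhammer (norm (1 - x) + 1) (j + 1) / fact (j + 1) * (norm x + 2)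
      * (C * (b powr (2 - Re x) * inverse b ^ j))"
  proof -
    have "norm (1 - y) \<le> norm (1 - x) + 1"
      using norm_triangle_ineq[of "1 - x" "x - y"] y by simp
    then have "pochhammer (norm (1 - y)) (j + 1) \<le> pochhammer (norm (1 - x) + 1) (j + 1)"
      by (intro pochhammer_mono) auto
    moreover have "norm y + 1 \<le> norm x + 2"
      using norm_triangle_ineq[of x "y - x"] y by (simp add: norm_minus_commute)
    moreover have "b powr (1 - Re y - real j) \<le> b powr (2 - Re x - real j)"
      using b Re_y by (intro powr_mono) auto
    moreover have "b powr (2 - Re x - real j) = b powr (2 - Re x) * inverse b ^ j"
      using b by (simp add: powr_diff powr_realpow power_inverse divide_inverse)
    moreover have "pochhammer (norm (1 - x) + 1) (j + 1) \<ge> 0"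
      by (simp add: pochhammer_nonneg_real)
    ultimately show ?thesis
      using C(1) by (intro mult_mono divide_right_mono mult_left_mono) auto
  qed
  finally show ?thesis
    by (simp add: mult_ac)
qed

lemma continuation_step_holomorphic:
  assumes b: "b > 1"
    and F_holo: "F holomorphic_on {s. Re s > 1 - real n}"
    and F_eq: "\<And>s. Re s > 1 \<Longrightarrow> F s = hurwitz_Z b s"
  shows "continuation_step b F holomorphic_on {s. Re s > - real n}"
proof -
  define H where "H = {s. Re s > - real n}"
  define t where "t j s = continuation_coeff s j * F (s + of_nat j + 1)" for j s
  obtain C where C: "C \<ge> 0" "\<And>w. Re w \<ge> 2 \<Longrightarrow> norm (\<zeta> b w) \<le> C * b powr (2 - Re w)"
    using hurwitz_zeta_series_bound[of b] b by auto
  have t_holo: "t j holomorphic_on H" for j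
  proof -
    have "(\<lambda>s. s + of_nat j + 1) holomorphic_on H"
      by (intro holomorphic_intros)
    moreover have "(\<lambda>s. s + of_nat j + 1) ` H \<subseteq> {s. Re s > 1 - real n}"
      by (auto simp: H_def)
    ultimately have "(\<lambda>s. F (s + of_nat j + 1)) holomorphic_on H"
      using holomorphic_on_compose_gen[OF _ F_holo] by (simp add: o_def)
    then show ?thesis
      unfolding t_def continuation_coeff_def gbinomial_pochhammer pochhammer_prod
      by (intro holomorphic_intros) auto
  qed
  have "(\<lambda>s. \<Sum>j. t j s) holomorphic_on H"
  proof (rule holomorphic_uniform_sequence[where f = "\<lambda>m s. \<Sum>j<m. t j s"])
    show "open H" unfolding H_def by (rule open_halfspace_Re_gt)
    show "(\<lambda>s. \<Sum>j<m. t j s) holomorphic_on H" for m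
      by (intro holomorphic_intros t_holo)
    fix x assume x: "x \<in> H"
    define d where "d = min 1 ((Re x + real n) / 2)"
    have d: "d > 0" "d \<le> 1" "d < Re x + real n"
      using x by (auto simp: d_def H_def min_def field_simps)
    define M where "M j = pochhammer (norm (1 - x) + 1) (j + 1) / fact (j + 1) * inverse b ^ j
                            * ((norm x + 2) * (C * b powr (2 - Re x)))" for j
    have "uniform_limit (cball x d) (\<lambda>m s. \<Sum>j<m. t j s) (\<lambda>s. \<Sum>j. t j s) sequentially"
    proof (rule Weierstrass_m_test_ev)
      show "summable M"
        unfolding M_def using b by (intro summable_mult2 summable_pochhammer_power) (auto simp: field_simps)
      have "norm (t j y) \<le> M j" if "y \<in> cball x d" "real j \<ge> 2 - Re x" for j y
      proof -
        have y: "norm (x - y) \<le> 1"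
          using that(1) d(2) by (simp add: dist_norm)
        have Re: "Re (y + of_nat j + 1) > 1"
          using abs_Re_le_cmod[of "x - y"] y that(2) by simp
        show ?thesis
          unfolding t_def M_def F_eq[OF Re]
          by (rule norm_continuation_term_le_uniform[OF b C y that(2)])
      qed
      then show "\<forall>\<^sub>F j in sequentially. \<forall>y\<in>cball x d. norm (t j y) \<le> M j"
        using eventually_ge_at_top[of "nat \<lceil>2 - Re x\<rceil>"] by (auto elim!: eventually_mono)
    qed
    moreover have "cball x d \<subseteq> H"
    proof
      fix y assume "y \<in> cball x d"
      then have "Re x - Re y \<le> d"
        using abs_Re_le_cmod[of "x - y"] by (simp add: dist_norm)
      then show "y \<in> H"
        using d(3) by (simp add: H_def)
    qed
    ultimately show "\<exists>d>0. cball x d \<subseteq> H \<and>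
        uniform_limit (cball x d) (\<lambda>m s. \<Sum>j<m. t j s) (\<lambda>s. \<Sum>j. t j s) sequentially"
      using d(1) by blast
  qed
  then show ?thesis
    unfolding continuation_step_def [abs_def] t_def H_def by (intro holomorphic_intros)
qed

definition hurwitz_Z_cont :: "real \<Rightarrow> nat \<Rightarrow> complex \<Rightarrow> complex" where
  "hurwitz_Z_cont b n = (continuation_step b ^^ n) (hurwitz_Z b)"

lemma hurwitz_Z_cont_eq:
  assumes "b > 1" "Re s > 1"
  shows "hurwitz_Z_cont b n s = hurwitz_Z b s"
  using assms(2)
proof (induction n arbitrary: s)
  case (Suc n)
  then show ?case
    using continuation_step_eq[OF assms(1)] by (simp add: hurwitz_Z_cont_def)
qed (simp add: hurwitz_Z_cont_def)

lemma hurwitz_Z_cont_holomorphic: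
  assumes "b > 1"
  shows "hurwitz_Z_cont b n holomorphic_on {s. Re s > 1 - real n}"
proof (induction n)
  case 0
  have "hurwitz_Z b holomorphic_on {s. Re s > 1}"
    unfolding hurwitz_Z_def [abs_def] using hurwitz_zeta_series_holomorphic[of b] assms
    by (intro holomorphic_intros) auto
  then show ?case
    by (simp add: hurwitz_Z_cont_def)
next
  case (Suc n)
  then show ?case
    using continuation_step_holomorphic[OF assms Suc hurwitz_Z_cont_eq[OF assms]]
    by (simp add: hurwitz_Z_cont_def)
qed

lemma hurwitz_Z_cont_agree:
  assumes b: "b > 1" and "m \<le> n" and s: "Re s > 1 - real m"
  shows "hurwitz_Z_cont b n s = hurwitz_Z_cont b m s"
proof (rule analytic_continuation_open[of "{s. Re s > 1}" "{s. Re s > 1 - real m}"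
    "hurwitz_Z_cont b n" "hurwitz_Z_cont b m"])
  show "hurwitz_Z_cont b n holomorphic_on {s. Re s > 1 - real m}"
  proof (rule holomorphic_on_subset)
    show "hurwitz_Z_cont b n holomorphic_on {s. Re s > 1 - real n}"
      by (rule hurwitz_Z_cont_holomorphic[OF b])
    show "{s. Re s > 1 - real m} \<subseteq> {s. Re s > 1 - real n}"
      using \<open>m \<le> n\<close> by auto
  qed
  show "hurwitz_Z_cont b m holomorphic_on {s. Re s > 1 - real m}"
    by (rule hurwitz_Z_cont_holomorphic[OF b])
  show "hurwitz_Z_cont b n z = hurwitz_Z_cont b m z" if "z \<in> {s. Re s > 1}" for z
    using that hurwitz_Z_cont_eq[OF b] by simp
  show "{s. Re s > 1} \<noteq> {}"
    by (auto intro!: exI[of _ 2])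
  show "connected {s. Re s > 1 - real m}"
    by (intro convex_connected convex_halfspace_Re_gt)
qed (use s in \<open>auto intro: open_halfspace_Re_gt\<close>)

lemma continuation_coeff_at_1: "continuation_coeff 1 j = 0"
  by (simp add: continuation_coeff_def)

lemma hurwitz_Z_entire:
  assumes b: "b > 1"
  obtains G where "G holomorphic_on UNIV" "G 1 = 1" "\<And>s. Re s > 1 \<Longrightarrow> G s = hurwitz_Z b s"
proof
  define N where "N s = Suc (nat \<lceil>1 - Re s\<rceil>)" for s
  define G where "G s = hurwitz_Z_cont b (N s) s" for s
  have N: "Re s > 1 - real (N s)" for s
    unfolding N_def by linarith
  show "G holomorphic_on UNIV"
    unfolding holomorphic_on_def
  proof
    fix z :: complex
    define H where "H = {s. Re s > 1 - real (N z)}"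
    have "G s = hurwitz_Z_cont b (N z) s" if "s \<in> H" for s
    proof -
      define m where "m = min (N s) (N z)"
      have m: "Re s > 1 - real m"
        using that N[of s] by (auto simp: H_def m_def min_def)
      have "G s = hurwitz_Z_cont b m s"
        unfolding G_def by (rule hurwitz_Z_cont_agree[OF b _ m]) (simp add: m_def)
      also have "\<dots> = hurwitz_Z_cont b (N z) s"
        by (rule hurwitz_Z_cont_agree[OF b _ m, symmetric]) (simp add: m_def)
      finally show ?thesis .
    qed
    then have "G holomorphic_on H"
      using hurwitz_Z_cont_holomorphic[OF b, of "N z"] unfolding H_def
      by (metis holomorphic_transform)
    moreover have "open H"
      unfolding H_def by (rule open_halfspace_Re_gt)
    moreover have "z \<in> H"
      using N[of z] by (simp add: H_def)
    ultimately have "G field_differentiable at z"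
      by (rule holomorphic_on_imp_differentiable_at)
    then show "G field_differentiable at z within UNIV"
      by simp
  qed
  have "N 1 = 1"
    by (simp add: N_def)
  then show "G 1 = 1"
    using b by (simp add: G_def hurwitz_Z_cont_def continuation_step_def continuation_coeff_at_1)
  show "G s = hurwitz_Z b s" if "Re s > 1" for s
    using hurwitz_Z_cont_eq[OF b that] by (simp add: G_def)
qed

lemma hurwitz_zeta_regular_eqI:
  assumes g: "g holomorphic_on UNIV" "\<And>s. Re s > 1 \<Longrightarrow> g s = \<zeta> a s - 1 / (s - 1)"
  shows "hurwitz_zeta_regular a = g"
  unfolding hurwitz_zeta_regular_def
proof (rule the_equality)
  fix h assume h: "h holomorphic_on UNIV \<and> (\<forall>s. Re s > 1 \<longrightarrow> h s = \<zeta> a s - 1 / (s - 1))"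
  show "h = g"
  proof
    fix z
    show "h z = g z"
    proof (rule analytic_continuation_open[of "{s. Re s > 1}" UNIV h g])
      show "{s. Re s > 1} \<noteq> {}"
        by (auto intro!: exI[of _ 2])
      show "h w = g w" if "w \<in> {s. Re s > 1}" for w
        using that g(2) h by simp
    qed (use g(1) h in \<open>auto intro: open_halfspace_Re_gt\<close>)
  qed
qed (use g in auto)

text \<open>The continuation was built for \<open>b > 1\<close> only (the binomial expansion of
  \<open>(k + b + 1)^(1-s)\<close> around \<open>k + b\<close> needs \<open>k + b > 1\<close>); \<open>\<zeta>(s, a) = a^(-s) + \<zeta>(s, a + 1)\<close>
  reduces \<open>a > 0\<close> to that case.\<close>

lemma hurwitz_zeta_regular:
  assumes a: "a > 0"
  shows "hurwitz_zeta_regular a holomorphic_on UNIV"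
    and "\<And>s. Re s > 1 \<Longrightarrow> hurwitz_zeta_regular a s = \<zeta> a s - 1 / (s - 1)"
proof -
  obtain G where G: "G holomorphic_on UNIV" "G 1 = 1" "\<And>s. Re s > 1 \<Longrightarrow> G s = hurwitz_Z (a + 1) s"
    using hurwitz_Z_entire[of "a + 1"] a by auto
  define g where "g s = complex_of_real a powr (-s) + (if s = 1 then deriv G 1 else (G s - 1) / (s - 1))" for s
  have "(\<lambda>s. if s = 1 then deriv G 1 else (G s - 1) / (s - 1)) holomorphic_on UNIV"
    using pole_lemma[OF G(1), of 1] unfolding G(2) by simp
  then have "g holomorphic_on UNIV"
    unfolding g_def by (intro holomorphic_intros)
  moreover have "g s = \<zeta> a s - 1 / (s - 1)" if "Re s > 1" for s
  proof -
    have "s \<noteq> 1" using that by auto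
    then show ?thesis
      using that a G(3)[OF that] hurwitz_zeta_series_shift[OF a that]
      by (simp add: g_def hurwitz_Z_def field_simps)
  qed
  ultimately have "hurwitz_zeta_regular a = g"
    by (rule hurwitz_zeta_regular_eqI)
  with \<open>g holomorphic_on UNIV\<close> \<open>\<And>s. Re s > 1 \<Longrightarrow> g s = \<zeta> a s - 1 / (s - 1)\<close>
  show "hurwitz_zeta_regular a holomorphic_on UNIV"
    and "\<And>s. Re s > 1 \<Longrightarrow> hurwitz_zeta_regular a s = \<zeta> a s - 1 / (s - 1)"
    by auto
qed

lemma stieltjes_series_sums:
  assumes a: "a > 0"
  shows "(\<lambda>n. (-1) ^ n / fact n * 2 ^ n * stieltjes n a) sums (\<zeta> a 3 - 1 / 2)"
proof -
  have "(\<lambda>n. (deriv ^^ n) (hurwitz_zeta_regular a) 1 / fact n * (3 - 1) ^ n) sums hurwitz_zeta_regular a 3"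
    using hurwitz_zeta_regular(1)[OF a]
    by (intro holomorphic_power_series[where r = 3]) (auto intro: holomorphic_on_subset simp: dist_norm)
  moreover have "(-1) ^ n / fact n * 2 ^ n * stieltjes n a =
      (deriv ^^ n) (hurwitz_zeta_regular a) 1 / fact n * (3 - 1) ^ n" for n
  proof -
    have "((-1) ^ n * (-1) ^ n :: complex) = 1"
      by (rule minus_one_mult_self)
    then show ?thesis
      unfolding stieltjes_def by (simp add: mult_ac)
  qed
  moreover have "hurwitz_zeta_regular a 3 = \<zeta> a 3 - 1 / 2"
    using hurwitz_zeta_regular(2)[OF a, of 3] by simp
  ultimately show ?thesis
    by (simp only:)
qed

section \<open>The reflection formula for \<open>\<zeta>(3, x)\<close>\<close>

lemma Gamma_reflection_real:
  assumes "0 < x" "x < 1"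
  shows "Gamma x * Gamma (1 - x) = pi / sin (pi * x)"
proof -
  have "1 - complex_of_real x = complex_of_real (1 - x)"
    by simp
  then have "complex_of_real (Gamma x * Gamma (1 - x)) =
      Gamma (complex_of_real x) * Gamma (1 - complex_of_real x)"
    by (simp only: of_real_mult Gamma_complex_of_real)
  also have "\<dots> = of_real pi / sin (of_real pi * of_real x)"
    by (rule Gamma_reflection_complex)
  also have "\<dots> = complex_of_real (pi / sin (pi * x))"
    by (simp flip: sin_of_real)
  finally show ?thesis
    by (simp only: of_real_eq_iff)
qed

lemma DERIV_zero_if_locally_zero:
  fixes F :: "real \<Rightarrow> real"
  assumes "open S" "x \<in> S" "\<And>y. y \<in> S \<Longrightarrow> F y = 0" "(F has_real_derivative D) (at x)"
  shows "D = 0"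
proof -
  have "((\<lambda>_. 0) has_real_derivative D) (at x)"
    by (rule has_field_derivative_transform_within_open[OF assms(4) assms(1,2)]) (use assms(3) in auto)
  then show ?thesis
    using DERIV_const DERIV_unique by blast
qed

lemma not_nonpos_Ints_if_pos: "(x::real) > 0 \<Longrightarrow> x \<notin> \<int>\<^sub>\<le>\<^sub>0"
  by (auto elim!: nonpos_Ints_cases)

text \<open>Differentiating the reflection formula for \<open>ln \<Gamma>\<close> three times.\<close>

lemma ln_Gamma_reflection_real:
  assumes x: "x \<in> {0<..<1}"
  shows "ln_Gamma x + ln_Gamma (1 - x) + ln (sin (pi * x)) - ln pi = 0"
proof -
  have Gamma_pos: "Gamma x > 0" "Gamma (1 - x) > 0"
    using x by auto
  then have "ln_Gamma x + ln_Gamma (1 - x) = ln (Gamma x * Gamma (1 - x))"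
    using x by (simp add: ln_Gamma_real_pos ln_mult_pos[OF Gamma_pos])
  moreover have "sin (pi * x) > 0"
    using x by (intro sin_gt_zero) auto
  ultimately show ?thesis
    using x Gamma_reflection_real[of x] by (simp add: ln_div)
qed

lemma Digamma_reflection_real:
  assumes x: "x \<in> {0<..<1}"
  shows "Digamma x - Digamma (1 - x) + pi * cos (pi * x) / sin (pi * x) = 0"
proof (rule DERIV_zero_if_locally_zero[OF _ x ln_Gamma_reflection_real])
  have "sin (pi * x) > 0"
    using x by (intro sin_gt_zero) auto
  then show "((\<lambda>x. ln_Gamma x + ln_Gamma (1 - x) + ln (sin (pi * x)) - ln pi) has_real_derivative
      Digamma x - Digamma (1 - x) + pi * cos (pi * x) / sin (pi * x)) (at x)"
    using x by (auto intro!: derivative_eq_intros simp: field_simps)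
qed simp

lemma Polygamma_1_reflection_real:
  assumes x: "x \<in> {0<..<1}"
  shows "Polygamma 1 x + Polygamma 1 (1 - x) - pi ^ 2 / sin (pi * x) ^ 2 = 0"
proof (rule DERIV_zero_if_locally_zero[OF _ x Digamma_reflection_real])
  have "sin (pi * x) > 0"
    using x by (intro sin_gt_zero) auto
  moreover have "x \<notin> \<int>\<^sub>\<le>\<^sub>0" "1 - x \<notin> \<int>\<^sub>\<le>\<^sub>0"
    using x by (auto intro!: not_nonpos_Ints_if_pos)
  ultimately show "((\<lambda>x. Digamma x - Digamma (1 - x) + pi * cos (pi * x) / sin (pi * x)) has_real_derivative
      Polygamma 1 x + Polygamma 1 (1 - x) - pi ^ 2 / sin (pi * x) ^ 2) (at x)"
    using x
    by (auto intro!: derivative_eq_intros simp: field_simps power2_eq_square)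
      (simp add: algebra_simps sin_squared_eq flip: power2_eq_square)
qed simp

lemma Polygamma_2_reflection_real:
  assumes x: "x \<in> {0<..<1}"
  shows "Polygamma 2 x - Polygamma 2 (1 - x) + 2 * pi ^ 3 * cos (pi * x) / sin (pi * x) ^ 3 = 0"
proof (rule DERIV_zero_if_locally_zero[OF _ x Polygamma_1_reflection_real])
  have "sin (pi * x) > 0"
    using x by (intro sin_gt_zero) auto
  moreover have "x \<notin> \<int>\<^sub>\<le>\<^sub>0" "1 - x \<notin> \<int>\<^sub>\<le>\<^sub>0"
    using x by (auto intro!: not_nonpos_Ints_if_pos)
  ultimately show "((\<lambda>x. Polygamma 1 x + Polygamma 1 (1 - x) - pi ^ 2 / sin (pi * x) ^ 2) has_real_derivative
      Polygamma 2 x - Polygamma 2 (1 - x) + 2 * pi ^ 3 * cos (pi * x) / sin (pi * x) ^ 3) (at x)"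
    using x
    by (auto intro!: derivative_eq_intros simp: field_simps power2_eq_square power3_eq_cube eval_nat_numeral)
qed simp

lemma hurwitz_zeta_series_3:
  assumes x: "x > 0"
  shows "\<zeta> x 3 = complex_of_real (- Polygamma 2 x / 2)"
proof -
  have "(\<lambda>k. inverse ((x + of_nat k) ^ Suc 2)) sums ((-1) ^ Suc 2 * Polygamma 2 x / fact 2)"
    using x by (intro Polygamma_LIMSEQ) auto
  then have "(\<lambda>k. complex_of_real (inverse ((x + real k) ^ 3))) sums complex_of_real (- Polygamma 2 x / 2)"
    by (intro sums_of_real) (simp add: numeral_3_eq_3)
  moreover have "complex_of_real (real k + x) powr (-3) = complex_of_real (inverse ((x + real k) ^ 3))" for k
  proof -
    have "complex_of_real (real k + x) powr (-3) = complex_of_real ((real k + x) powr (-3))"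
      using x by (subst powr_of_real[symmetric]) auto
    then show ?thesis
      using x by (simp add: powr_minus powr_numeral add.commute)
  qed
  then have "(\<lambda>k. complex_of_real (inverse ((x + real k) ^ 3))) sums \<zeta> x 3"
    using hurwitz_zeta_series_sums[of x 3] x by simp
  ultimately show ?thesis
    by (simp add: sums_iff)
qed

lemma hurwitz_zeta_series_3_reflection:
  assumes "0 < x" "x < 1"
  shows "\<zeta> x 3 - \<zeta> (1 - x) 3 = complex_of_real (pi ^ 3 * cos (pi * x) / sin (pi * x) ^ 3)"
proof -
  have "pi ^ 3 * cos (pi * x) / sin (pi * x) ^ 3 = - Polygamma 2 x / 2 - (- Polygamma 2 (1 - x) / 2)"
    using Polygamma_2_reflection_real[of x] assms by (simp add: field_simps)
  then show ?thesis
    using assms by (simp add: hurwitz_zeta_series_3)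
qed

section \<open>Thirds and sevenths\<close>

lemma hurwitz_zeta_series_3_thirds:
  "\<zeta> (1/3) 3 - \<zeta> (2/3) 3 = complex_of_real (4 * pi ^ 3 / (3 * sqrt 3))"
proof -
  have "\<zeta> (1/3) 3 - \<zeta> (1 - 1/3) 3 = complex_of_real (pi ^ 3 * cos (pi / 3) / sin (pi / 3) ^ 3)"
    using hurwitz_zeta_series_3_reflection[of "1/3"] by simp
  moreover have "sqrt 3 ^ 3 = 3 * sqrt (3::real)"
    by (simp add: power3_eq_cube)
  ultimately show ?thesis
    by (simp add: cos_60 sin_60 power_divide field_simps)
qed

lemma cos_pi_div_7_cubic: "8 * cos (pi / 7) ^ 3 - 4 * cos (pi / 7) ^ 2 - 4 * cos (pi / 7) + 1 = 0"
proof -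
  define c where "c = cos (pi / 7)"
  \<comment> \<open>From cos (4 pi/7) = - cos (3 pi/7); the spurious factor c + 1 is positive.\<close>
  have "cos (2 * (2 * (pi / 7))) = - cos (3 * (pi / 7))"
    using cos_pi_minus[of "3 * (pi / 7)"] by simp
  then have "(c + 1) * (8 * c ^ 3 - 4 * c ^ 2 - 4 * c + 1) = 0"
    unfolding cos_double_cos cos_treble_cos c_def[symmetric]
    by (simp add: algebra_simps power2_eq_square power3_eq_cube)
  moreover have "c > -1"
    unfolding c_def using cos_monotone_0_pi[of "pi / 7" pi] by simp
  ultimately show ?thesis
    by (simp add: c_def)
qed

lemma cos_pi_div_7_gt: "cos (pi / 7) > 1 / 2"
  using cos_monotone_0_pi[of "pi / 7" "pi / 3"] by (simp add: cos_60)

lemma sqrt_7_eq: "sqrt 7 = 4 * sin (pi / 7) * (2 * cos (pi / 7) - 1) * (cos (pi / 7) + 1)"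
proof (rule real_sqrt_unique)
  define c where "c = cos (pi / 7)"
  have "(4 * sin (pi / 7) * (2 * c - 1) * (c + 1)) ^ 2 = 16 * (1 - c ^ 2) * (2 * c - 1) ^ 2 * (c + 1) ^ 2"
    by (simp add: power_mult_distrib sin_squared_eq c_def)
  also have "\<dots> = 7 + (9 + 4 * c - 12 * c ^ 2 - 8 * c ^ 3) * (8 * c ^ 3 - 4 * c ^ 2 - 4 * c + 1)"
    by algebra
  also have "\<dots> = 7"
    using cos_pi_div_7_cubic by (simp add: c_def)
  finally show "(4 * sin (pi / 7) * (2 * cos (pi / 7) - 1) * (cos (pi / 7) + 1)) ^ 2 = 7"
    by (simp add: c_def)
  show "0 \<le> 4 * sin (pi / 7) * (2 * cos (pi / 7) - 1) * (cos (pi / 7) + 1)"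
    using cos_pi_div_7_gt sin_gt_zero[of "pi / 7"] by simp
qed

text \<open>With \<open>c = cos (\<pi>/7)\<close>, \<open>s = sin (\<pi>/7)\<close> the left-hand side is
  \<open>cos t / sin^3 t + cos 2t / sin^3 2t - cos 3t / sin^3 3t\<close> at \<open>t = \<pi>/7\<close>, and the right-hand side
  is \<open>32 / sqrt 7\<close> by \<open>sqrt_7_eq\<close>.\<close>

lemma cubic_cot_identity:
  fixes c s :: real
  assumes p: "8 * c ^ 3 - 4 * c ^ 2 - 4 * c + 1 = 0" and s2: "s ^ 2 = 1 - c ^ 2"
    and s: "s > 0" and c: "c > 1 / 2"
  shows "c / s ^ 3 + (2 * c ^ 2 - 1) / (2 * s * c) ^ 3 - (4 * c ^ 3 - 3 * c) / (s * (4 * c ^ 2 - 1)) ^ 3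
           = 32 / (4 * s * (2 * c - 1) * (c + 1))"
proof -
  define A where "A = 4 * c ^ 2 - 1"
  define N where "N = 8 * c ^ 4 * A ^ 3 + (2 * c ^ 2 - 1) * A ^ 3 - 8 * c ^ 3 * (4 * c ^ 3 - 3 * c)"
  have "c * c > 1 / 2 * (1 / 2)"
    using c by (intro mult_strict_mono) auto
  then have A: "A > 0"
    unfolding A_def by (simp add: power2_eq_square)
  have c0: "c > 0"
    using c by linarith
  have "N * (2 * c - 1) * (c + 1) - 64 * c ^ 3 * A ^ 3 * (1 - c ^ 2) =
      (c + 1) * (-1 - 2 * c + 2 * c ^ 2 + 44 * c ^ 3 + 48 * c ^ 4 - 240 * c ^ 5 - 256 * c ^ 6
        + 512 * c ^ 7 + 128 * c ^ 8) * (8 * c ^ 3 - 4 * c ^ 2 - 4 * c + 1)"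
    unfolding N_def A_def by algebra
  with p have key: "N * (2 * c - 1) * (c + 1) = 64 * c ^ 3 * A ^ 3 * s ^ 2"
    by (simp add: s2)
  have "c / s ^ 3 + (2 * c ^ 2 - 1) / (2 * s * c) ^ 3 - (4 * c ^ 3 - 3 * c) / (s * (4 * c ^ 2 - 1)) ^ 3
      = N / (8 * c ^ 3 * A ^ 3 * s ^ 3)"
    unfolding N_def A_def[symmetric] using s c0 A
    by (simp add: field_simps power_mult_distrib) (simp add: algebra_simps eval_nat_numeral)
  also have "\<dots> = 32 / (4 * s * (2 * c - 1) * (c + 1))"
  proof (subst frac_eq_eq)
    have "N * (4 * s * (2 * c - 1) * (c + 1)) = 4 * s * (N * (2 * c - 1) * (c + 1))"
      by (simp add: algebra_simps)
    also have "\<dots> = 32 * (8 * c ^ 3 * A ^ 3 * s ^ 3)"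
      unfolding key by (simp add: algebra_simps power2_eq_square power3_eq_cube)
    finally show "N * (4 * s * (2 * c - 1) * (c + 1)) = 32 * (8 * c ^ 3 * A ^ 3 * s ^ 3)" .
  qed (use s c0 c A in auto)
  finally show ?thesis .
qed

lemma cos_div_sin_cube_sum_pi_div_7:
  "cos (pi / 7) / sin (pi / 7) ^ 3 + cos (2 * (pi / 7)) / sin (2 * (pi / 7)) ^ 3
     - cos (3 * (pi / 7)) / sin (3 * (pi / 7)) ^ 3 = 32 / sqrt 7"
proof -
  define c s where "c = cos (pi / 7)" and "s = sin (pi / 7)"
  have double: "sin (2 * (pi / 7)) = 2 * s * c" "cos (2 * (pi / 7)) = 2 * c ^ 2 - 1"
    unfolding s_def c_def by (rule sin_double, rule cos_double_cos)
  have "sin (3 * (pi / 7)) = sin (2 * (pi / 7)) * c + cos (2 * (pi / 7)) * s"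
    using sin_add[of "2 * (pi / 7)" "pi / 7"] by (simp add: c_def s_def)
  also have "\<dots> = s * (4 * c ^ 2 - 1)"
    unfolding double by (simp add: algebra_simps power2_eq_square)
  finally have sin_triple: "sin (3 * (pi / 7)) = s * (4 * c ^ 2 - 1)" .
  have cos_triple: "cos (3 * (pi / 7)) = 4 * c ^ 3 - 3 * c"
    unfolding c_def by (rule cos_treble_cos)
  have cubic: "8 * c ^ 3 - 4 * c ^ 2 - 4 * c + 1 = 0" and c: "c > 1 / 2"
    using cos_pi_div_7_cubic cos_pi_div_7_gt by (simp_all add: c_def)
  have s: "s ^ 2 = 1 - c ^ 2" "s > 0"
    using sin_gt_zero[of "pi / 7"] by (simp_all add: s_def c_def sin_squared_eq)
  have sqrt_7: "sqrt 7 = 4 * s * (2 * c - 1) * (c + 1)"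
    using sqrt_7_eq by (simp add: c_def s_def)
  show ?thesis
    unfolding double sin_triple cos_triple c_def[symmetric] s_def[symmetric] sqrt_7
    by (rule cubic_cot_identity[OF cubic s c])
qed

lemma hurwitz_zeta_series_3_sevenths:
  "(\<zeta> (1/7) 3 - \<zeta> (6/7) 3) + (\<zeta> (2/7) 3 - \<zeta> (5/7) 3) - (\<zeta> (3/7) 3 - \<zeta> (4/7) 3)
     = complex_of_real (32 * pi ^ 3 / sqrt 7)"
proof -
  have "\<zeta> (1/7) 3 - \<zeta> (6/7) 3 = complex_of_real (pi ^ 3 * (cos (pi / 7) / sin (pi / 7) ^ 3))"
    using hurwitz_zeta_series_3_reflection[of "1/7"] by simp
  moreover have "\<zeta> (2/7) 3 - \<zeta> (5/7) 3 =
      complex_of_real (pi ^ 3 * (cos (2 * (pi / 7)) / sin (2 * (pi / 7)) ^ 3))"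
    using hurwitz_zeta_series_3_reflection[of "2/7"] by (simp add: mult_ac)
  moreover have "\<zeta> (3/7) 3 - \<zeta> (4/7) 3 =
      complex_of_real (pi ^ 3 * (cos (3 * (pi / 7)) / sin (3 * (pi / 7)) ^ 3))"
    using hurwitz_zeta_series_3_reflection[of "3/7"] by (simp add: mult_ac)
  ultimately show ?thesis
    using arg_cong[OF cos_div_sin_cube_sum_pi_div_7, of "\<lambda>x. complex_of_real (pi ^ 3 * x)"]
    by (simp only: distrib_left right_diff_distrib of_real_add of_real_diff) (simp add: field_simps)
qed

lemma powr_five_halves: "x \<ge> 0 \<Longrightarrow> x powr (5 / 2) = x ^ 2 * sqrt x"
  using powr_add[of x 2 "1 / 2"] by (simp add: powr_half_sqrt)

theorem corollary1:
  shows "\<exists>S1 S2.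
    (\<lambda>n. (-1) ^ n / fact n * 2 ^ n * (stieltjes n (1/3) - stieltjes n (2/3))) sums S1 \<and>
    (\<lambda>n. (-1) ^ n / fact n * 2 ^ n *
        (stieltjes n (1/7) + stieltjes n (2/7) - stieltjes n (3/7)
         + stieltjes n (4/7) - stieltjes n (5/7) - stieltjes n (6/7))) sums S2 \<and>
    complex_of_real (pi ^ 3) = complex_of_real (81 / (4 * 3 powr (5/2))) * S1 \<and>
    complex_of_real (pi ^ 3) = complex_of_real (343 / (32 * 7 powr (5/2))) * S2"
proof (intro exI conjI)
  define T where "T a n = (-1) ^ n / fact n * 2 ^ n * stieltjes n a" for a n
  have T: "T a sums (\<zeta> a 3 - 1 / 2)" if "a > 0" for a
    unfolding T_def using stieltjes_series_sums[OF that] .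
  show "(\<lambda>n. (-1) ^ n / fact n * 2 ^ n * (stieltjes n (1/3) - stieltjes n (2/3))) sums
      (\<zeta> (1/3) 3 - \<zeta> (2/3) 3)"
    using sums_diff[OF T T, of "1/3" "2/3"] by (simp add: T_def algebra_simps)
  show "(\<lambda>n. (-1) ^ n / fact n * 2 ^ n *
        (stieltjes n (1/7) + stieltjes n (2/7) - stieltjes n (3/7)
         + stieltjes n (4/7) - stieltjes n (5/7) - stieltjes n (6/7))) sums
      ((\<zeta> (1/7) 3 - \<zeta> (6/7) 3) + (\<zeta> (2/7) 3 - \<zeta> (5/7) 3) - (\<zeta> (3/7) 3 - \<zeta> (4/7) 3))"
    using sums_diff[OF sums_diff[OF sums_add[OF sums_diff[OF sums_add[OF T T] T] T] T] T,
        of "1/7" "2/7" "3/7" "4/7" "5/7" "6/7"]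
    by (simp add: T_def algebra_simps)
  have "pi ^ 3 = 81 / (4 * 3 powr (5/2)) * (4 * pi ^ 3 / (3 * sqrt 3))"
    and "pi ^ 3 = 343 / (32 * 7 powr (5/2)) * (32 * pi ^ 3 / sqrt 7)"
    by (simp_all add: powr_five_halves field_simps power2_eq_square)
  then show "complex_of_real (pi ^ 3) = complex_of_real (81 / (4 * 3 powr (5/2))) * (\<zeta> (1/3) 3 - \<zeta> (2/3) 3)"
    and "complex_of_real (pi ^ 3) = complex_of_real (343 / (32 * 7 powr (5/2))) *
      ((\<zeta> (1/7) 3 - \<zeta> (6/7) 3) + (\<zeta> (2/7) 3 - \<zeta> (5/7) 3) - (\<zeta> (3/7) 3 - \<zeta> (4/7) 3))"
    unfolding hurwitz_zeta_series_3_thirds hurwitz_zeta_series_3_sevenths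
    by (simp_all only: of_real_mult[symmetric])
qed

end
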